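(* Let $\Omega=[-r,r]$, let $s>0$ and let $K$ satisfy the hypotheses (iii) or (iv) listed in the context (with this $s$). Let $\Omega_1,\dots,\Omega_N\subset\Omega$ be pairwise disjoint intervals with ${\rm diam}(\Omega_j)>4+2s$ for each $j$ and ${\rm dist}(\Omega_j,\Omega_k)>2$ for $j\neq k$. Then for every choice of signs $i_1,\dots,i_N\in\{-1,1\}$ there exists a stationary solution $u\in L^2(\Omega)$ of $u_t=-u+f(Tu)$ (i.e. $u=f(Tu)$ a.e.) such that $u|_{\Omega_j}\equiv i_j$ for every $j$.
   Context: $K:\mathbb{R}\to\mathbb{R}$ is bounded and even; $K_+=\max(K,0)$, $K_-=\max(-K,0)$. Hypothesis (iii): ${\rm supp}(K_+)=[-2,2]$, ${\rm supp}(K_-)=[-2-s,-2]\cup[2,2+s]$, $K_+$ nonincreasing on $(0,\infty)$, $\int_0^2K_+\ge1+\int_{\mathbb{R}}K_-$. Hypothesis (iv): same supports, $K_+$ nonincreasing on $(0,\infty)$, $\int_0^2K_+\ge1+\int_2^{2+s}K_-$, and $\int_0^xK_+\ge\int_2^{2+x}K_-$ for all $x\in[0,2]$. $f$ is the saturation function $f(x)=1$ for $x>1$, $f(x)=x$ for $x\in[-1,1]$, $f(x)=-1$ for $x<-1$. For $u\in L^2(\Omega)$, $Tu(x)=\int_{\mathbb{R}}K(x-y)\widetilde u(y)\,dy$ for $x\in\Omega$, where $\widetilde u$ is the extension of $u$ by $0$ outside $\Omega$. *)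

theory Defs
  imports "HOL-Analysis.Analysis"
begin

definition posp :: "(real \<Rightarrow> real) \<Rightarrow> real \<Rightarrow> real" where
  "posp K x = max (K x) 0"

definition negp :: "(real \<Rightarrow> real) \<Rightarrow> real \<Rightarrow> real" where
  "negp K x = max (- K x) 0"

definition supp :: "(real \<Rightarrow> real) \<Rightarrow> real set" where
  "supp g = closure {x. g x \<noteq> 0}"

definition hyp_iii :: "(real \<Rightarrow> real) \<Rightarrow> real \<Rightarrow> bool" where
  "hyp_iii K s \<longleftrightarrow>
     supp (posp K) = {-2..2} \<and>
     supp (negp K) = {-2-s..-2} \<union> {2..2+s} \<and>
     antimono_on {0<..} (posp K) \<and>
     (LBINT x=0..2. posp K x) \<ge> 1 + (LBINT x. negp K x)"

definition hyp_iv :: "(real \<Rightarrow> real) \<Rightarrow> real \<Rightarrow> bool" where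
  "hyp_iv K s \<longleftrightarrow>
     supp (posp K) = {-2..2} \<and>
     supp (negp K) = {-2-s..-2} \<union> {2..2+s} \<and>
     antimono_on {0<..} (posp K) \<and>
     (LBINT x=0..2. posp K x) \<ge> 1 + (LBINT x=2..2+s. negp K x) \<and>
     (\<forall>x\<in>{0..2}. (LBINT y=0..x. posp K y) \<ge> (LBINT y=2..2+x. negp K y))"

definition sat :: "real \<Rightarrow> real" where
  "sat x = (if x > 1 then 1 else if x < -1 then -1 else x)"

definition Top :: "(real \<Rightarrow> real) \<Rightarrow> real set \<Rightarrow> (real \<Rightarrow> real) \<Rightarrow> real \<Rightarrow> real" where
  "Top K \<Omega> u x = (LINT y|lborel. K (x - y) * indicator \<Omega> y * u y)"

definition L2_on :: "real set \<Rightarrow> (real \<Rightarrow> real) \<Rightarrow> bool" where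
  "L2_on \<Omega> u \<longleftrightarrow> set_borel_measurable lborel \<Omega> u \<and>
      set_integrable lborel \<Omega> (\<lambda>x. (u x)\<^sup>2)"

end

theory Submission
  imports Defs
begin

text \<open>
  The stationary solution is assembled from two building blocks: the constants \<open>\<plusminus>1\<close>, and an
  odd "front" \<open>U\<close> with \<open>U = 1\<close> on \<open>(-\<infinity>,-1]\<close>, \<open>U = -1\<close> on \<open>[1,\<infinity>)\<close> and \<open>U = sat (K * U)\<close> on
  \<open>(-1,1)\<close>. The front is obtained on \<open>(0,1)\<close> as the limit of a monotonically decreasing
  iteration started at \<open>0\<close>: monotonicity of the iteration is where \<open>K\<close> being nonnegative and
  nonincreasing on \<open>[0,2]\<close> enters. Sort the intervals; on each one and on the gap to its
  successor put the sign of that interval, except that where the sign changes a translated copy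
  of \<open>\<plusminus>U\<close> is placed just before the next interval. At a transition point the equation holds
  by the fixed point property of \<open>U\<close>. Anywhere else both half-windows of the convolution see
  either a plateau of the right sign or a front behind a plateau; because every interval is
  longer than \<open>4 + 2s\<close>, one of the two sees a plateau of length \<open>2 + s\<close>. The integral
  conditions (iii) or (iv) on \<open>K\<close> then say that the convolution is at least \<open>1\<close> in absolute
  value, with the sign of the plateau, so saturation reproduces that sign.
\<close>

lemma sat_eq_max_min: "sat x = max (-1) (min 1 x)"
  unfolding sat_def by auto

lemma sat_mono: "x \<le> y \<Longrightarrow> sat x \<le> sat y"
  unfolding sat_eq_max_min by auto

lemma abs_sat_le_1: "\<bar>sat x\<bar> \<le> 1"
  unfolding sat_eq_max_min by auto

lemma sat_minus: "sat (- x) = - sat x"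
  unfolding sat_def by auto

lemma sat_sign_mult: "c = 1 \<or> c = -1 \<Longrightarrow> sat (c * w) = c * sat w"
  using sat_minus[of w] by auto

lemma sat_eq_sign: "c = 1 \<or> c = -1 \<Longrightarrow> 1 \<le> c * w \<Longrightarrow> sat w = c"
  by (auto simp: sat_def)

lemma tendsto_sat: "(f \<longlongrightarrow> l) F \<Longrightarrow> ((\<lambda>n. sat (f n)) \<longlongrightarrow> sat l) F"
  unfolding sat_eq_max_min by (intro tendsto_intros)

lemma borel_measurable_sat[measurable]: "sat \<in> borel_measurable borel"
  unfolding sat_eq_max_min[abs_def] by measurable

lemma lborel_integral_shift: "(LINT y|lborel. f y) = (LINT t|lborel. f (a + t))"
  for f :: "real \<Rightarrow> real"
  using lborel_integral_real_affine[of 1 f a] by simp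

lemma lborel_integral_reflect: "(LINT y|lborel. f y) = (LINT t|lborel. f (- t))"
  for f :: "real \<Rightarrow> real"
  using lborel_integral_real_affine[of "-1" f 0] by simp

lemma set_integral_eq_indicator: "(LBINT x : A. f x) = (LINT x|lborel. f x * indicator A x)"
  for f :: "real \<Rightarrow> real"
  unfolding set_lebesgue_integral_def by (intro Bochner_Integration.integral_cong) (auto simp: mult.commute)

lemma L2_on_bounded:
  assumes [measurable]: "u \<in> borel_measurable borel" and bounded: "\<And>x. \<bar>u x\<bar> \<le> 1"
  shows "L2_on {a..b} u"
  unfolding L2_on_def set_borel_measurable_def set_integrable_def
proof
  show "(\<lambda>x. indicator {a..b} x *\<^sub>R u x) \<in> borel_measurable lborel" by measurable
  have "AE x in lborel. norm (indicator {a..b} x *\<^sub>R (u x)\<^sup>2) \<le> norm (indicator {a..b} x :: real)"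
  proof (rule AE_I2)
    fix x
    have "(u x)\<^sup>2 \<le> 1" using bounded[of x] by (simp add: abs_square_le_1)
    then show "norm (indicator {a..b} x *\<^sub>R (u x)\<^sup>2) \<le> norm (indicator {a..b} x :: real)"
      by (auto simp: indicator_def)
  qed
  then show "integrable lborel (\<lambda>x. indicator {a..b} x *\<^sub>R (u x)\<^sup>2)"
    by (rule Bochner_Integration.integrable_bound[rotated 2])
      (auto simp: integrable_indicator_iff emeasure_lborel_Icc_eq)
qed

locale inhibitory_kernel =
  fixes K :: "real \<Rightarrow> real" and s B :: real
  assumes K_measurable[measurable]: "K \<in> borel_measurable borel"
    and K_bounded: "\<And>x. \<bar>K x\<bar> \<le> B"
    and K_even: "\<And>x. K (- x) = K x"
    and s_pos: "s > 0"
    and negp_inside: "\<And>x. \<bar>x\<bar> < 2 \<Longrightarrow> negp K x = 0"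
    and posp_outside: "\<And>x. \<bar>x\<bar> > 2 \<Longrightarrow> posp K x = 0"
    and K_zero_far: "\<And>x. \<bar>x\<bar> > 2 + s \<Longrightarrow> K x = 0"
    and posp_antimono: "\<And>x y. 0 < x \<Longrightarrow> x \<le> y \<Longrightarrow> posp K y \<le> posp K x"
begin

lemma K_eq_posp_minus_negp: "K x = posp K x - negp K x"
  by (simp add: posp_def negp_def)

lemma posp_nonneg: "posp K x \<ge> 0" and negp_nonneg: "negp K x \<ge> 0"
  by (auto simp: posp_def negp_def)

lemma borel_measurable_posp[measurable]: "posp K \<in> borel_measurable borel"
  unfolding posp_def by measurable

lemma borel_measurable_negp[measurable]: "negp K \<in> borel_measurable borel"
  unfolding negp_def by measurable

lemma integrable_K: "integrable lborel K"
proof -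
  have "AE x in lborel. norm (K x) \<le> norm (B * indicator {-2-s..2+s} x :: real)"
  proof (rule AE_I2)
    fix x show "norm (K x) \<le> norm (B * indicator {-2-s..2+s} x :: real)"
      using K_bounded[of x] K_zero_far[of x] by (cases "x \<in> {-2-s..2+s}") auto
  qed
  then show ?thesis
    by (rule Bochner_Integration.integrable_bound[rotated 2])
      (auto simp: integrable_indicator_iff emeasure_lborel_Icc_eq)
qed

lemma integrable_K_affine_mult:
  assumes "c \<noteq> 0" and [measurable]: "g \<in> borel_measurable borel" and bounded: "\<And>t. \<bar>g t\<bar> \<le> M"
  shows "integrable lborel (\<lambda>t. K (a + c * t) * g t)"
proof -
  have "integrable lborel (\<lambda>t. M * K (a + c * t))"
    using lborel_integrable_real_affine[OF integrable_K \<open>c \<noteq> 0\<close>] by simp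
  moreover have "AE x in lborel. norm (K (a + c * x) * g x) \<le> norm (M * K (a + c * x))"
  proof (rule AE_I2)
    fix x
    have "\<bar>g x\<bar> \<le> \<bar>M\<bar>" using bounded[of x] by simp
    then show "norm (K (a + c * x) * g x) \<le> norm (M * K (a + c * x))"
      by (simp add: abs_mult) (metis abs_ge_zero mult.commute mult_left_mono)
  qed
  ultimately show ?thesis
    using Bochner_Integration.integrable_bound[of lborel "\<lambda>t. M * K (a + c * t)" "\<lambda>t. K (a + c * t) * g t"]
    by simp
qed

lemma integrable_K_diff_mult:
  "g \<in> borel_measurable borel \<Longrightarrow> (\<And>t. \<bar>g t\<bar> \<le> M) \<Longrightarrow> integrable lborel (\<lambda>t. K (a - t) * g t)"
  using integrable_K_affine_mult[of "-1" g M a] by simp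

lemma integrable_K_add_mult:
  "g \<in> borel_measurable borel \<Longrightarrow> (\<And>t. \<bar>g t\<bar> \<le> M) \<Longrightarrow> integrable lborel (\<lambda>t. K (a + t) * g t)"
  using integrable_K_affine_mult[of 1 g M a] by simp

lemma K_nonneg_inside: "\<bar>t\<bar> < 2 \<Longrightarrow> K t \<ge> 0"
  using negp_inside[of t] K_eq_posp_minus_negp[of t] posp_nonneg[of t] by simp

lemma K_nonpos_outside: "\<bar>t\<bar> > 2 \<Longrightarrow> K t \<le> 0"
  using posp_outside[of t] K_eq_posp_minus_negp[of t] negp_nonneg[of t] by simp

lemma K_le_inside: assumes "0 < t" "t \<le> t'" "t < 2" shows "K t' \<le> K t"
proof -
  have "K t = posp K t" using negp_inside[of t] K_eq_posp_minus_negp[of t] assms by simp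
  moreover have "K t' \<le> posp K t'" using K_eq_posp_minus_negp[of t'] negp_nonneg[of t'] by simp
  moreover have "posp K t' \<le> posp K t" using posp_antimono assms by simp
  ultimately show ?thesis by simp
qed

lemma K_ge_minus_negp: "K t \<ge> - negp K t"
  using K_eq_posp_minus_negp[of t] posp_nonneg[of t] by simp

definition front_ext :: "(real \<Rightarrow> real) \<Rightarrow> real \<Rightarrow> real" where
  "front_ext \<psi> y = (if y \<le> -1 then 1 else if y \<ge> 1 then -1 else if y > 0 then \<psi> y
                 else if y < 0 then - \<psi> (- y) else 0)"

definition front_field :: "(real \<Rightarrow> real) \<Rightarrow> real \<Rightarrow> real" where
  "front_field \<psi> x = (LINT y|lborel. K (x - y) * front_ext \<psi> y)"

lemma borel_measurable_front_ext[measurable]: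
  assumes [measurable]: "\<psi> \<in> borel_measurable borel"
  shows "front_ext \<psi> \<in> borel_measurable borel"
proof -
  have [measurable]: "(\<lambda>y. \<psi> (- y)) \<in> borel_measurable borel" by measurable
  show ?thesis unfolding front_ext_def[abs_def] by measurable
qed

lemma abs_front_ext_le_1: "(\<And>y. \<bar>\<psi> y\<bar> \<le> 1) \<Longrightarrow> \<bar>front_ext \<psi> y\<bar> \<le> 1"
  unfolding front_ext_def by auto

lemma front_ext_minus: "front_ext \<psi> (- y) = - front_ext \<psi> y"
  unfolding front_ext_def by auto

lemma front_ext_decomp:
  "front_ext \<psi> y = front_ext (\<lambda>_. 0) y + indicator {0<..<1} y * \<psi> y - indicator {0<..<1} (- y) * \<psi> (- y)"
  unfolding front_ext_def by (auto simp: indicator_def)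

lemma front_field_decomp:
  assumes [measurable]: "\<psi> \<in> borel_measurable borel" and bounded: "\<And>y. \<bar>\<psi> y\<bar> \<le> 1"
  shows "front_field \<psi> x
    = front_field (\<lambda>_. 0) x + (LINT y|lborel. (K (x - y) - K (x + y)) * (indicator {0<..<1} y * \<psi> y))"
proof -
  define g where "g y = indicator {0<..<1} y * \<psi> y" for y
  have [measurable]: "g \<in> borel_measurable borel" unfolding g_def by measurable
  have g_bounded: "\<bar>g y\<bar> \<le> 1" for y using bounded[of y] by (auto simp: g_def indicator_def)
  have [measurable]: "(\<lambda>y. g (- y)) \<in> borel_measurable borel" by measurable
  have zero_bounded: "\<bar>front_ext (\<lambda>_. 0) y\<bar> \<le> 1" for y by (rule abs_front_ext_le_1) simp
  have "front_field \<psi> x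
      = (LINT y|lborel. K (x - y) * front_ext (\<lambda>_. 0) y + K (x - y) * g y - K (x - y) * g (- y))"
    unfolding front_field_def by (subst front_ext_decomp) (simp add: g_def algebra_simps)
  also have "\<dots> = (LINT y|lborel. K (x - y) * front_ext (\<lambda>_. 0) y) + (LINT y|lborel. K (x - y) * g y)
      - (LINT y|lborel. K (x - y) * g (- y))"
    using integrable_K_diff_mult[of "front_ext (\<lambda>_. 0)" 1 x] integrable_K_diff_mult[of g 1 x]
      integrable_K_diff_mult[of "\<lambda>y. g (- y)" 1 x] zero_bounded g_bounded
    by (simp add: integral_add integral_diff)
  also have "(LINT y|lborel. K (x - y) * g (- y)) = (LINT y|lborel. K (x + y) * g y)"
    by (subst lborel_integral_reflect) simp
  also have "(LINT y|lborel. K (x - y) * front_ext (\<lambda>_. 0) y) + (LINT y|lborel. K (x - y) * g y)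
      - (LINT y|lborel. K (x + y) * g y)
      = (LINT y|lborel. K (x - y) * front_ext (\<lambda>_. 0) y) + (LINT y|lborel. (K (x - y) - K (x + y)) * g y)"
    using integrable_K_diff_mult[of g 1 x] integrable_K_add_mult[of g 1 x] g_bounded
    by (simp add: integral_diff[symmetric] left_diff_distrib)
  finally show ?thesis unfolding front_field_def g_def by simp
qed

lemma K_reflection_le:
  assumes "0 < x" "x < 1" "0 < y" "y < 1" "y \<noteq> x"
  shows "K (x + y) \<le> K (x - y)"
proof -
  have "K (x - y) = K \<bar>x - y\<bar>" using K_even[of "x - y"] by (cases "x \<le> y") (auto simp: abs_if)
  moreover have "K (x + y) \<le> K \<bar>x - y\<bar>" using K_le_inside[of "\<bar>x - y\<bar>" "x + y"] assms by auto
  ultimately show ?thesis by simp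
qed

lemma front_field_mono:
  assumes [measurable]: "\<psi> \<in> borel_measurable borel" "\<psi>' \<in> borel_measurable borel"
    and bounded: "\<And>y. \<bar>\<psi> y\<bar> \<le> 1" "\<And>y. \<bar>\<psi>' y\<bar> \<le> 1"
    and le: "\<And>y. 0 < y \<Longrightarrow> y < 1 \<Longrightarrow> \<psi> y \<le> \<psi>' y"
    and x: "0 < x" "x < 1"
  shows "front_field \<psi> x \<le> front_field \<psi>' x"
proof -
  have integrable: "integrable lborel (\<lambda>y. (K (x - y) - K (x + y)) * (indicator {0<..<1} y * f y))"
    if [measurable]: "f \<in> borel_measurable borel" and "\<And>y. \<bar>f y\<bar> \<le> 1" for f
  proof -
    have "\<bar>indicator {0<..<1} y * f y\<bar> \<le> 1" for y using that(2)[of y] by (auto simp: indicator_def)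
    then show ?thesis
      using integrable_K_diff_mult[of "\<lambda>y. indicator {0<..<1} y * f y" 1 x]
        integrable_K_add_mult[of "\<lambda>y. indicator {0<..<1} y * f y" 1 x]
      by (simp add: left_diff_distrib)
  qed
  have "AE y in lborel. y \<noteq> x" by (rule AE_lborel_singleton[THEN AE_mp]) auto
  then have "AE y in lborel. (K (x - y) - K (x + y)) * (indicator {0<..<1} y * \<psi> y)
      \<le> (K (x - y) - K (x + y)) * (indicator {0<..<1} y * \<psi>' y)"
    by eventually_elim
      (use K_reflection_le[OF x] le in \<open>auto simp: indicator_def intro!: mult_left_mono\<close>)
  then have "(LINT y|lborel. (K (x - y) - K (x + y)) * (indicator {0<..<1} y * \<psi> y))
     \<le> (LINT y|lborel. (K (x - y) - K (x + y)) * (indicator {0<..<1} y * \<psi>' y))"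
    by (intro integral_mono_AE integrable) (use bounded in auto)
  then show ?thesis using front_field_decomp[of \<psi> x] front_field_decomp[of \<psi>' x] bounded by simp
qed

lemma front_ext_zero: "front_ext (\<lambda>_. 0) y = indicator {..-1} y - indicator {1..} y"
  unfolding front_ext_def by (auto simp: indicator_def)

lemma front_field_zero_nonpos:
  assumes x: "0 < x" "x < 1"
  shows "front_field (\<lambda>_. 0) x \<le> 0"
proof -
  have indicator_bounded: "\<bar>indicator A y :: real\<bar> \<le> 1" for A y by (auto simp: indicator_def)
  have left: "(LINT y|lborel. K (x - y) * indicator {..-1} y) = (LINT u|lborel. K (0 + u) * indicator {1+x..} u)"
    by (subst lborel_integral_reflect, subst lborel_integral_shift[where a="-x"],
        rule Bochner_Integration.integral_cong) (auto simp: indicator_def)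
  have right: "(LINT y|lborel. K (x - y) * indicator {1..} y) = (LINT u|lborel. K (0 + u) * indicator {1-x..} u)"
  proof (subst lborel_integral_shift[where a=x], rule Bochner_Integration.integral_cong)
    fix u show "K (x - (x + u)) * indicator {1..} (x + u) = K (0 + u) * indicator {1 - x..} u"
      using K_even[of u] by (auto simp: indicator_def)
  qed simp
  have "front_field (\<lambda>_. 0) x
      = (LINT y|lborel. K (x - y) * indicator {..-1} y) - (LINT y|lborel. K (x - y) * indicator {1..} y)"
    unfolding front_field_def front_ext_zero
    using integrable_K_diff_mult[of "indicator {..-1}" 1 x] integrable_K_diff_mult[of "indicator {1..}" 1 x]
      indicator_bounded
    by (simp add: right_diff_distrib integral_diff)
  also have "\<dots> = (LINT u|lborel. K (0 + u) * (indicator {1+x..} u - indicator {1-x..} u))"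
    unfolding left right
    using integrable_K_add_mult[of "indicator {1+x..}" 1 0] integrable_K_add_mult[of "indicator {1-x..}" 1 0]
      indicator_bounded
    by (simp add: right_diff_distrib integral_diff)
  also have "\<dots> \<le> 0"
  proof -
    have "K (0 + u) * (indicator {1+x..} u - indicator {1-x..} u) \<le> 0" for u
      using K_nonneg_inside[of u] x by (cases "1 - x \<le> u \<and> u < 1 + x") (auto simp: indicator_def)
    then have "0 \<le> (LINT u|lborel. - (K (0 + u) * (indicator {1+x..} u - indicator {1-x..} u)))"
      by (intro integral_nonneg_AE AE_I2) (simp add: le_minus_iff)
    then show ?thesis by simp
  qed
  finally show ?thesis .
qed

lemma front_field_minus: "front_field \<psi> (- x) = - front_field \<psi> x"
proof -
  have "front_field \<psi> (- x) = (LINT t|lborel. K (- x - - t) * front_ext \<psi> (- t))"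
    unfolding front_field_def by (rule lborel_integral_reflect)
  also have "\<dots> = (LINT t|lborel. - (K (x - t) * front_ext \<psi> t))"
    using K_even[of "x - t" for t] by (simp add: front_ext_minus)
  finally show ?thesis unfolding front_field_def by simp
qed

lemma borel_measurable_front_field[measurable]:
  assumes [measurable]: "\<psi> \<in> borel_measurable borel"
  shows "front_field \<psi> \<in> borel_measurable borel"
  unfolding front_field_def[abs_def] by measurable

primrec front_iter :: "nat \<Rightarrow> real \<Rightarrow> real" where
  "front_iter 0 = (\<lambda>_. 0)"
| "front_iter (Suc n) = (\<lambda>x. if 0 < x \<and> x < 1 then sat (front_field (front_iter n) x) else 0)"

lemma borel_measurable_front_iter[measurable]: "front_iter n \<in> borel_measurable borel"
proof (induction n)
  case (Suc n)
  then have [measurable]: "front_iter n \<in> borel_measurable borel" .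
  show ?case by simp
qed simp

lemma abs_front_iter_le_1: "\<bar>front_iter n x\<bar> \<le> 1"
  using abs_sat_le_1 by (cases n) auto

lemma front_iter_Suc_le: "front_iter (Suc n) x \<le> front_iter n x"
proof (induction n arbitrary: x)
  case 0
  show ?case
  proof (cases "0 < x \<and> x < 1")
    case True
    then have "sat (front_field (\<lambda>_. 0) x) \<le> sat 0"
      using front_field_zero_nonpos by (intro sat_mono) auto
    then show ?thesis using True by (simp add: sat_def)
  qed auto
next
  case (Suc n)
  show ?case
  proof (cases "0 < x \<and> x < 1")
    case True
    have "front_field (front_iter (Suc n)) x \<le> front_field (front_iter n) x"
    proof (rule front_field_mono)
      show "front_iter (Suc n) y \<le> front_iter n y" if "0 < y" "y < 1" for y
        by (rule Suc.IH)
    qed (use True abs_front_iter_le_1 abs_sat_le_1 in auto)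
    then show ?thesis using True by (simp add: sat_mono)
  qed auto
qed

lemma front_iter_convergent: "\<exists>L. (\<lambda>n. front_iter n x) \<longlonglongrightarrow> L"
proof -
  have "decseq (\<lambda>n. front_iter n x)" using front_iter_Suc_le by (intro decseq_SucI) auto
  moreover have "\<forall>i. -1 \<le> front_iter i x" using abs_front_iter_le_1 by (auto simp: abs_le_iff)
  ultimately obtain L where "(\<lambda>n. front_iter n x) \<longlonglongrightarrow> L" by (rule decseq_convergent)
  then show ?thesis by blast
qed

definition front_lim :: "real \<Rightarrow> real" where "front_lim x = lim (\<lambda>n. front_iter n x)"

lemma front_iter_tendsto: "(\<lambda>n. front_iter n x) \<longlonglongrightarrow> front_lim x"
  using front_iter_convergent[of x] unfolding front_lim_def by (metis limI)

lemma borel_measurable_front_lim[measurable]: "front_lim \<in> borel_measurable borel"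
  by (rule borel_measurable_LIMSEQ_real[OF front_iter_tendsto borel_measurable_front_iter])

lemma abs_front_lim_le_1: "\<bar>front_lim x\<bar> \<le> 1"
  using tendsto_rabs[OF front_iter_tendsto[of x]] abs_front_iter_le_1
  by (intro tendsto_upperbound[of "\<lambda>n. \<bar>front_iter n x\<bar>"]) auto

lemma front_field_iter_tendsto: "(\<lambda>n. front_field (front_iter n) x) \<longlonglongrightarrow> front_field front_lim x"
  unfolding front_field_def
proof (rule integral_dominated_convergence[where w="\<lambda>y. \<bar>K (x - y)\<bar>"])
  show "(\<lambda>y. K (x - y) * front_ext front_lim y) \<in> borel_measurable lborel" by measurable
  show "\<And>n. (\<lambda>y. K (x - y) * front_ext (front_iter n) y) \<in> borel_measurable lborel" by measurable
  show "integrable lborel (\<lambda>y. \<bar>K (x - y)\<bar>)"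
    using integrable_K_diff_mult[of "\<lambda>_. 1" 1 x] by simp
  show "AE y in lborel. (\<lambda>n. K (x - y) * front_ext (front_iter n) y) \<longlonglongrightarrow> K (x - y) * front_ext front_lim y"
  proof (rule AE_I2)
    fix y
    have "(\<lambda>n. front_ext (front_iter n) y) \<longlonglongrightarrow> front_ext front_lim y"
      unfolding front_ext_def using front_iter_tendsto[of y] front_iter_tendsto[of "-y"]
      by (auto intro: tendsto_intros)
    then show "(\<lambda>n. K (x - y) * front_ext (front_iter n) y) \<longlonglongrightarrow> K (x - y) * front_ext front_lim y"
      by (intro tendsto_intros)
  qed
  show "\<And>n. AE y in lborel. norm (K (x - y) * front_ext (front_iter n) y) \<le> \<bar>K (x - y)\<bar>"
  proof (intro AE_I2)
    fix n y
    have "\<bar>front_ext (front_iter n) y\<bar> \<le> 1" by (rule abs_front_ext_le_1) (rule abs_front_iter_le_1)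
    then show "norm (K (x - y) * front_ext (front_iter n) y) \<le> \<bar>K (x - y)\<bar>"
      by (simp add: abs_mult mult_left_le)
  qed
qed

lemma front_lim_fixed_point:
  assumes "0 < x" "x < 1"
  shows "front_lim x = sat (front_field front_lim x)"
proof -
  have "(\<lambda>n. front_iter (Suc n) x) \<longlonglongrightarrow> front_lim x" using front_iter_tendsto[of x] by (rule LIMSEQ_Suc)
  moreover have "(\<lambda>n. front_iter (Suc n) x) \<longlonglongrightarrow> sat (front_field front_lim x)"
    using tendsto_sat[OF front_field_iter_tendsto[of x]] assms by simp
  ultimately show ?thesis by (rule LIMSEQ_unique)
qed

definition front :: "real \<Rightarrow> real" where "front = front_ext front_lim"

lemma borel_measurable_front[measurable]: "front \<in> borel_measurable borel"
  unfolding front_def by measurable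

lemma abs_front_le_1: "\<bar>front y\<bar> \<le> 1"
  unfolding front_def by (rule abs_front_ext_le_1) (rule abs_front_lim_le_1)

lemma front_minus: "front (- y) = - front y"
  unfolding front_def by (rule front_ext_minus)

lemma front_left: "y \<le> -1 \<Longrightarrow> front y = 1" and front_right: "y \<ge> 1 \<Longrightarrow> front y = -1"
  unfolding front_def front_ext_def by auto

lemma front_lim_nonpos: "front_lim x \<le> 0"
proof -
  have "front_iter n x \<le> 0" for n
  proof (induction n)
    case (Suc n)
    then show ?case using front_iter_Suc_le[of n x] by linarith
  qed simp
  then show ?thesis
    using front_iter_tendsto[of x] by (intro tendsto_upperbound[of "\<lambda>n. front_iter n x"]) auto
qed

lemma front_nonneg_left: "-1 < y \<Longrightarrow> y < 0 \<Longrightarrow> 0 \<le> front y"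
  unfolding front_def front_ext_def using front_lim_nonpos[of "-y"] by auto

lemma front_fixed_point:
  assumes "-1 < x" "x < 1"
  shows "front x = sat (LINT y|lborel. K (x - y) * front y)"
proof -
  have conv: "(LINT y|lborel. K (x - y) * front y) = front_field front_lim x"
    unfolding front_field_def front_def ..
  consider "0 < x" | "x < 0" | "x = 0" by linarith
  then show ?thesis
  proof cases
    case 1
    then show ?thesis unfolding conv using front_lim_fixed_point assms by (simp add: front_def front_ext_def)
  next
    case 2
    have "front x = - front_lim (- x)" using 2 assms by (simp add: front_def front_ext_def)
    also have "\<dots> = - sat (front_field front_lim (- x))" using front_lim_fixed_point[of "-x"] 2 assms by simp
    also have "\<dots> = sat (front_field front_lim x)" by (simp add: front_field_minus sat_minus)
    finally show ?thesis unfolding conv .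
  next
    case 3
    have "front_field front_lim 0 = 0" using front_field_minus[of front_lim 0] by simp
    then show ?thesis unfolding conv using 3 by (simp add: front_def front_ext_def sat_def)
  qed
qed

definition pos_mass :: "real \<Rightarrow> real" where
  "pos_mass e = (LINT t|lborel. posp K t * indicator {0..e} t)"

definition neg_mass :: "real \<Rightarrow> real" where
  "neg_mass e = (LINT t|lborel. negp K t * indicator {0..e} t)"

lemma integrable_posp: "integrable lborel (posp K)"
proof -
  have "AE x in lborel. norm (posp K x) \<le> norm (K x)"
    by (rule AE_I2) (auto simp: posp_def)
  then show ?thesis using Bochner_Integration.integrable_bound[OF integrable_K, of "posp K"] by simp
qed

lemma integrable_negp: "integrable lborel (negp K)"
proof -
  have "AE x in lborel. norm (negp K x) \<le> norm (K x)"
    by (rule AE_I2) (auto simp: negp_def)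
  then show ?thesis using Bochner_Integration.integrable_bound[OF integrable_K, of "negp K"] by simp
qed

lemma integrable_posp_indicator: "integrable lborel (\<lambda>t. posp K t * indicator A t)" if "A \<in> sets borel"
  using integrable_real_mult_indicator[of A lborel "posp K"] integrable_posp that by simp

lemma integrable_negp_indicator: "integrable lborel (\<lambda>t. negp K t * indicator A t)" if "A \<in> sets borel"
  using integrable_real_mult_indicator[of A lborel "negp K"] integrable_negp that by simp

lemma integrable_K_indicator: "integrable lborel (\<lambda>t. K t * indicator A t)" if "A \<in> sets borel"
  using integrable_real_mult_indicator[of A lborel "K"] integrable_K that by simp

lemma pos_mass_mono: "e \<le> e' \<Longrightarrow> pos_mass e \<le> pos_mass e'"
  unfolding pos_mass_def
  by (intro integral_mono integrable_posp_indicator) (auto simp: indicator_def intro: posp_nonneg)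

lemma neg_mass_mono: "e \<le> e' \<Longrightarrow> neg_mass e \<le> neg_mass e'"
  unfolding neg_mass_def
  by (intro integral_mono integrable_negp_indicator) (auto simp: indicator_def intro: negp_nonneg)

lemma pos_mass_nonneg: "0 \<le> pos_mass e"
  unfolding pos_mass_def by (intro integral_nonneg_AE AE_I2) (auto simp: indicator_def intro: posp_nonneg)

lemma pos_mass_const: "2 \<le> e \<Longrightarrow> pos_mass e = pos_mass 2"
  unfolding pos_mass_def
  by (rule Bochner_Integration.integral_cong) (auto simp: indicator_def intro!: posp_outside)

lemma neg_mass_eq_0: assumes "e \<le> 2" shows "neg_mass e = 0"
proof -
  have "AE t in lborel. t \<noteq> (2::real)" by (rule AE_lborel_singleton[THEN AE_mp]) auto
  then have "AE t in lborel. negp K t * indicator {0..e} t = 0"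
  proof (rule AE_mp, intro AE_I2 impI)
    fix t :: real assume "t \<noteq> 2"
    then show "negp K t * indicator {0..e} t = 0" using assms negp_inside[of t] by (auto simp: indicator_def)
  qed
  then show ?thesis unfolding neg_mass_def by (rule integral_eq_zero_AE)
qed

lemma neg_mass_const: "2 + s \<le> e \<Longrightarrow> neg_mass e = neg_mass (2 + s)"
  unfolding neg_mass_def
  by (rule Bochner_Integration.integral_cong) (auto simp: indicator_def negp_def K_zero_far)

lemma integral_K_indicator: "(LINT t|lborel. K t * indicator {0..e} t) = pos_mass e - neg_mass e"
proof -
  have "(LINT t|lborel. K t * indicator {0..e} t) = (LINT t|lborel. posp K t * indicator {0..e} t - negp K t * indicator {0..e} t)"
    by (rule Bochner_Integration.integral_cong) (auto simp: K_eq_posp_minus_negp[of t for t] left_diff_distrib)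
  also have "\<dots> = pos_mass e - neg_mass e" unfolding pos_mass_def neg_mass_def
    by (rule Bochner_Integration.integral_diff) (auto intro!: integrable_posp_indicator integrable_negp_indicator)
  finally show ?thesis .
qed

lemma interval_integral_posp: "0 \<le> e \<Longrightarrow> (LBINT x=0..e. posp K x) = pos_mass e"
  unfolding pos_mass_def using interval_integral_Icc[of 0 e "posp K"]
  by (simp add: set_integral_eq_indicator zero_ereal_def)

lemma interval_integral_negp:
  assumes "0 \<le> e"
  shows "(LBINT x=2..2+e. negp K x) = neg_mass (2 + e)"
proof -
  have ereal_add: "(2::ereal) + ereal e = ereal (2 + e)" by simp
  have "(LBINT x=2..2+e. negp K x) = (LINT x|lborel. negp K x * indicator {2..2+e} x)"
    unfolding ereal_add using assms by (simp add: interval_integral_Icc set_integral_eq_indicator)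
  also have "\<dots> = neg_mass (2 + e)" unfolding neg_mass_def
  proof (rule Bochner_Integration.integral_cong[OF refl])
    fix x show "negp K x * indicator {2..2 + e} x = negp K x * indicator {0..2 + e} x"
      using negp_inside[of x] by (cases "0 \<le> x \<and> x < 2") (auto simp: indicator_def)
  qed
  finally show ?thesis by (simp only: ereal_add)
qed

lemma neg_mass_le_total: "neg_mass e \<le> neg_mass (2 + s)"
  using neg_mass_mono[of e "2 + s"] neg_mass_const[of e] by (cases "e \<le> 2 + s") auto

lemma integral_negp: "(LBINT x. negp K x) = 2 * neg_mass (2 + s)"
proof -
  have negp_even: "negp K (- x) = negp K x" for x using K_even[of x] by (simp add: negp_def)
  have "(LBINT x. negp K x) = (LINT x|lborel. negp K x * indicator {0..} x + negp K x * indicator {..<0} x)"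
    by (rule Bochner_Integration.integral_cong) (auto simp: indicator_def)
  also have "\<dots> = (LINT x|lborel. negp K x * indicator {0..} x) + (LINT x|lborel. negp K x * indicator {..<0} x)"
    by (rule Bochner_Integration.integral_add) (auto intro!: integrable_negp_indicator)
  also have "(LINT x|lborel. negp K x * indicator {..<0} x) = (LINT x|lborel. negp K (- x) * indicator {..<0} (- x))"
    by (rule lborel_integral_reflect)
  also have "\<dots> = (LINT x|lborel. negp K x * indicator {0..} x)"
    using negp_inside[of 0] by (intro Bochner_Integration.integral_cong) (auto simp: negp_even indicator_def)
  also have "(LINT x|lborel. negp K x * indicator {0..} x) = neg_mass (2 + s)"
    unfolding neg_mass_def
  proof (rule Bochner_Integration.integral_cong[OF refl])
    fix x show "negp K x * indicator {0..} x = negp K x * indicator {0..2 + s} x"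
      using K_zero_far[of x] by (cases "x \<le> 2 + s") (auto simp: indicator_def negp_def)
  qed
  finally show ?thesis by simp
qed

text \<open>
  A plateau of length \<open>2 + s\<close> on one side of a point contributes \<open>pos_mass 2 - neg_mass (2 + s)\<close>
  to the convolution there, a plateau of length \<open>d\<close> followed by a front contributes at least
  \<open>pos_mass d - neg_mass (d + 1)\<close>; the balance condition says that together they reach the
  saturation level.
\<close>

definition mass_balance :: bool where
  "mass_balance \<longleftrightarrow> (\<forall>d\<ge>0. 1 \<le> pos_mass 2 - neg_mass (2 + s) + (pos_mass d - neg_mass (d + 1)))"

lemma mass_balance_if_hyp_iii:
  assumes "hyp_iii K s"
  shows mass_balance
proof -
  have "1 + 2 * neg_mass (2 + s) \<le> pos_mass 2"
    using assms interval_integral_posp[of 2] integral_negp unfolding hyp_iii_def by simp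
  then show ?thesis
    unfolding mass_balance_def using pos_mass_nonneg neg_mass_le_total
    by (smt (verit, best))
qed

lemma mass_balance_if_hyp_iv:
  assumes "hyp_iv K s"
  shows mass_balance
proof -
  have total: "1 + neg_mass (2 + s) \<le> pos_mass 2"
    using assms s_pos interval_integral_posp[of 2] interval_integral_negp[of s] unfolding hyp_iv_def by simp
  have partial: "neg_mass (2 + x) \<le> pos_mass x" if "0 \<le> x" "x \<le> 2" for x
  proof -
    have "ereal x \<in> {0..2}" using that by simp
    then have "(LBINT t=2..2+ereal x. negp K t) \<le> (LBINT t=0..ereal x. posp K t)"
      using assms unfolding hyp_iv_def by blast
    then show ?thesis using interval_integral_posp[of x] interval_integral_negp[of x] that by simp
  qed
  have "neg_mass (d + 1) \<le> pos_mass d" if "0 \<le> d" for d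
  proof -
    consider "d \<le> 1" | "1 < d" "d \<le> 3" | "3 < d" by linarith
    then show ?thesis
    proof cases
      case 1
      then show ?thesis using neg_mass_eq_0[of "d+1"] pos_mass_nonneg[of d] by simp
    next
      case 2
      have "neg_mass (d + 1) = neg_mass (2 + (d - 1))" by (simp add: algebra_simps)
      also have "\<dots> \<le> pos_mass (d - 1)" using 2 by (intro partial) auto
      also have "\<dots> \<le> pos_mass d" by (rule pos_mass_mono) simp
      finally show ?thesis .
    next
      case 3
      have "neg_mass (d + 1) \<le> pos_mass 2" using neg_mass_le_total[of "d + 1"] total by simp
      also have "\<dots> = pos_mass d" using 3 pos_mass_const[of d] by simp
      finally show ?thesis .
    qed
  qed
  then show ?thesis unfolding mass_balance_def using total by force
qed

definition half_conv :: "(real \<Rightarrow> real) \<Rightarrow> real" where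
  "half_conv g = (LINT t|lborel. K t * (indicator {0..} t * g t))"

lemma half_conv_cong: "(\<And>t. 0 \<le> t \<Longrightarrow> t \<le> 2 + s \<Longrightarrow> g t = g' t) \<Longrightarrow> half_conv g = half_conv g'"
  unfolding half_conv_def
proof (rule Bochner_Integration.integral_cong[OF refl])
  fix t assume "\<And>t. 0 \<le> t \<Longrightarrow> t \<le> 2 + s \<Longrightarrow> g t = g' t"
  then show "K t * (indicator {0..} t * g t) = K t * (indicator {0..} t * g' t)"
    using K_zero_far[of t] by (cases "0 \<le> t \<and> t \<le> 2 + s") (auto simp: indicator_def)
qed

lemma half_conv_step: "half_conv (\<lambda>t. indicator {..e} t) = pos_mass e - neg_mass e"
  unfolding half_conv_def integral_K_indicator[symmetric]
  by (rule Bochner_Integration.integral_cong) (auto simp: indicator_def)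

lemma front_odd_part_ge:
  assumes "0 \<le> d" "-1 < y" "y < 0"
  shows "- negp K (d + 1 + y) \<le> (K (d + 1 + y) - K (d + 1 - y)) * front y"
proof -
  define t where "t = d + 1 + y"
  have front_y: "0 \<le> front y" "front y \<le> 1"
    using front_nonneg_left[of y] assms abs_front_le_1[of y] by auto
  have "0 < t" using assms by (simp add: t_def)
  have K_diff: "- negp K t \<le> K t - K (d + 1 - y)"
  proof (cases "t < 2")
    case True
    then have "K (d + 1 - y) \<le> K t" using K_le_inside[of t "d + 1 - y"] \<open>0 < t\<close> assms by (simp add: t_def)
    moreover have "negp K t = 0" using negp_inside[of t] True \<open>0 < t\<close> by simp
    ultimately show ?thesis by simp
  next
    case False
    then have "K (d + 1 - y) \<le> 0" using K_nonpos_outside[of "d + 1 - y"] assms by (simp add: t_def)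
    then show ?thesis using K_ge_minus_negp[of t] by simp
  qed
  have "- negp K t \<le> - negp K t * front y" using front_y negp_nonneg[of t] by (simp add: mult_left_le)
  also have "\<dots> \<le> (K t - K (d + 1 - y)) * front y" using K_diff front_y by (intro mult_right_mono) auto
  finally show ?thesis by (simp add: t_def)
qed

lemma integral_negp_between:
  assumes "0 \<le> d"
  shows "(LINT t|lborel. negp K t * indicator {d<..<d+1} t) \<le> neg_mass (d + 1) - neg_mass d"
proof -
  have "(LINT t|lborel. negp K t * indicator {d<..<d+1} t)
      \<le> (LINT t|lborel. negp K t * indicator {0..d+1} t - negp K t * indicator {0..d} t)"
  proof (rule integral_mono)
    show "integrable lborel (\<lambda>t. negp K t * indicator {d<..<d + 1} t)"
      by (rule integrable_negp_indicator) simp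
    show "integrable lborel (\<lambda>t. negp K t * indicator {0..d+1} t - negp K t * indicator {0..d} t)"
      by (intro Bochner_Integration.integrable_diff integrable_negp_indicator) auto
    fix t
    show "negp K t * indicator {d<..<d + 1} t \<le> negp K t * indicator {0..d+1} t - negp K t * indicator {0..d} t"
      using assms negp_nonneg[of t] by (auto simp: indicator_def)
  qed
  also have "\<dots> = neg_mass (d + 1) - neg_mass d"
    unfolding neg_mass_def by (rule Bochner_Integration.integral_diff) (auto intro!: integrable_negp_indicator)
  finally show ?thesis .
qed

lemma integral_K_front_transition_ge:
  assumes "0 \<le> d"
  shows "neg_mass d - neg_mass (d + 1) \<le> (LINT t|lborel. K t * (indicator {d<..<d+2} t * front (t - d - 1)))"
proof -
  define w where "w y = indicator {-1<..<0} y * front y" for y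
  have [measurable]: "w \<in> borel_measurable borel" unfolding w_def by measurable
  have w_bounded: "\<bar>w y\<bar> \<le> 1" for y using abs_front_le_1[of y] by (auto simp: w_def indicator_def)
  have [measurable]: "(\<lambda>y. w (- y)) \<in> borel_measurable borel" by measurable
  have odd_split: "indicator {d<..<d+2} (d + 1 + y) * front (d + 1 + y - d - 1) = w y - w (- y)" for y
  proof -
    have "front 0 = 0" using front_minus[of 0] by simp
    then show ?thesis using front_minus[of y] by (auto simp: w_def indicator_def)
  qed
  have "(LINT t|lborel. K t * (indicator {d<..<d+2} t * front (t - d - 1)))
      = (LINT y|lborel. K (d + 1 + y) * w y) - (LINT y|lborel. K (d + 1 + y) * w (- y))"
    by (subst lborel_integral_shift[where a="d+1"], unfold odd_split)
      (use integrable_K_add_mult[of w 1 "d+1"] integrable_K_add_mult[of "\<lambda>y. w (-y)" 1 "d+1"] w_bounded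
        in \<open>simp add: right_diff_distrib integral_diff\<close>)
  also have "(LINT y|lborel. K (d + 1 + y) * w (- y)) = (LINT y|lborel. K (d + 1 - y) * w y)"
    by (subst lborel_integral_reflect) simp
  also have "(LINT y|lborel. K (d + 1 + y) * w y) - (LINT y|lborel. K (d + 1 - y) * w y)
      = (LINT y|lborel. (K (d + 1 + y) - K (d + 1 - y)) * w y)"
    using integrable_K_add_mult[of w 1 "d+1"] integrable_K_diff_mult[of w 1 "d+1"] w_bounded
    by (simp add: left_diff_distrib integral_diff)
  also have "\<dots> \<ge> (LINT y|lborel. - (negp K (d + 1 + y) * indicator {-1<..<0} y))"
  proof (rule integral_mono)
    have "integrable lborel (\<lambda>y. negp K (d + 1 + 1 * y))"
      using lborel_integrable_real_affine[OF integrable_negp, of 1 "d+1"] by simp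
    then show "integrable lborel (\<lambda>y. - (negp K (d + 1 + y) * indicator {-1<..<0} y))"
      by (intro integrable_minus integrable_real_mult_indicator) auto
    show "integrable lborel (\<lambda>y. (K (d + 1 + y) - K (d + 1 - y)) * w y)"
      using integrable_K_add_mult[of w 1 "d+1"] integrable_K_diff_mult[of w 1 "d+1"] w_bounded
      by (simp add: left_diff_distrib)
    show "- (negp K (d + 1 + y) * indicator {-1<..<0} y) \<le> (K (d + 1 + y) - K (d + 1 - y)) * w y" for y
      using front_odd_part_ge[OF assms, of y] by (cases "-1 < y \<and> y < 0") (auto simp: w_def)
  qed
  also have "(LINT y|lborel. - (negp K (d + 1 + y) * indicator {-1<..<0} y))
      = - (LINT t|lborel. negp K t * indicator {d<..<d+1} t)"
    by (subst lborel_integral_shift[where a="d+1"], simp)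
      (rule Bochner_Integration.integral_cong, auto simp: indicator_def)
  finally show ?thesis using integral_negp_between[OF assms] by simp
qed

lemma integral_K_tail_nonpos:
  assumes "0 \<le> d"
  shows "(LINT t|lborel. K t * indicator {d+2..} t) \<le> 0"
proof -
  have "AE t in lborel. t \<noteq> d + 2" by (rule AE_lborel_singleton[THEN AE_mp]) auto
  then have "AE t in lborel. 0 \<le> - (K t * indicator {d+2..} t)"
  proof (rule AE_mp, intro AE_I2 impI)
    fix t assume "t \<noteq> d + 2"
    then show "0 \<le> - (K t * indicator {d+2..} t)"
      using K_nonpos_outside[of t] assms by (cases "d + 2 \<le> t") (auto simp: indicator_def)
  qed
  then have "0 \<le> (LINT t|lborel. - (K t * indicator {d+2..} t))" by (rule integral_nonneg_AE)
  then show ?thesis by simp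
qed

lemma half_conv_front_ge:
  assumes "0 \<le> d"
  shows "pos_mass d - neg_mass (d + 1) \<le> half_conv (\<lambda>t. front (t - d - 1))"
proof -
  define h where "h t = indicator {d<..<d+2} t * front (t - d - 1)" for t
  have [measurable]: "h \<in> borel_measurable borel" unfolding h_def by measurable
  have h_bounded: "\<bar>h t\<bar> \<le> 1" for t using abs_front_le_1[of "t - d - 1"] by (auto simp: h_def indicator_def)
  have split: "indicator {0..} t * front (t - d - 1) = indicator {0..d} t + h t - indicator {d+2..} t" for t
    using assms front_left[of "t - d - 1"] front_right[of "t - d - 1"] by (auto simp: h_def indicator_def)
  have "half_conv (\<lambda>t. front (t - d - 1))
      = (LINT t|lborel. K t * indicator {0..d} t + K t * h t - K t * indicator {d+2..} t)"
    unfolding half_conv_def split by (simp add: algebra_simps)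
  also have "\<dots> = (LINT t|lborel. K t * indicator {0..d} t) + (LINT t|lborel. K t * h t)
      - (LINT t|lborel. K t * indicator {d+2..} t)"
    using integrable_K_indicator[of "{0..d}"] integrable_K_indicator[of "{d+2..}"]
      integrable_K_add_mult[of h 1 0] h_bounded
    by (simp add: integral_add integral_diff)
  finally show ?thesis
    using integral_K_indicator[of d] integral_K_front_transition_ge[OF assms] integral_K_tail_nonpos[OF assms]
    unfolding h_def by simp
qed

lemma conv_eq_half_conv:
  assumes [measurable]: "V \<in> borel_measurable borel" and bounded: "\<And>y. \<bar>V y\<bar> \<le> 1"
  shows "(LINT y|lborel. K (x - y) * V y) = half_conv (\<lambda>t. V (x + t)) + half_conv (\<lambda>t. V (x - t))"
proof -
  have "\<bar>indicator A y * V (x + y)\<bar> \<le> 1" for A y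
    using bounded[of "x + y"] by (auto simp: indicator_def)
  then have integrable: "integrable lborel (\<lambda>t. K (0 + t) * (indicator A t * V (x + t)))"
    if "A \<in> sets borel" for A
    using that by (intro integrable_K_add_mult[where M=1]) auto
  have "(LINT y|lborel. K (x - y) * V y) = (LINT t|lborel. K (x - (x + t)) * V (x + t))"
    by (rule lborel_integral_shift)
  also have "\<dots> = (LINT t|lborel. K (0 + t) * (indicator {0..} t * V (x + t))
      + K (0 + t) * (indicator {..<0} t * V (x + t)))"
    using K_even by (intro Bochner_Integration.integral_cong) (auto simp: indicator_def)
  also have "\<dots> = (LINT t|lborel. K (0 + t) * (indicator {0..} t * V (x + t)))
      + (LINT t|lborel. K (0 + t) * (indicator {..<0} t * V (x + t)))"
    by (intro Bochner_Integration.integral_add integrable) auto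
  also have "(LINT t|lborel. K (0 + t) * (indicator {..<0} t * V (x + t)))
      = (LINT t|lborel. K (0 + - t) * (indicator {..<0} (- t) * V (x + - t)))"
    by (rule lborel_integral_reflect)
  also have "\<dots> = (LINT t|lborel. K t * (indicator {0<..} t * V (x - t)))"
    using K_even by (intro Bochner_Integration.integral_cong) (auto simp: indicator_def)
  also have "\<dots> = (LINT t|lborel. K t * (indicator {0..} t * V (x - t)))"
  proof (rule Bochner_Integration.integral_cong_AE)
    show "AE t in lborel. K t * (indicator {0<..} t * V (x - t)) = K t * (indicator {0..} t * V (x - t))"
      by (rule AE_lborel_singleton[where c="0::real", THEN AE_mp], intro AE_I2) (auto simp: indicator_def)
  qed auto
  finally show ?thesis unfolding half_conv_def by simp
qed

lemma half_conv_cmult: "half_conv (\<lambda>t. c * g t) = c * half_conv g"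
  unfolding half_conv_def by (simp add: algebra_simps)

text \<open>
  What a half-window \<open>[0, 2 + s]\<close> of the convolution sees, after normalising the sign:
  a plateau \<open>1\<close> of length \<open>D\<close> followed by \<open>0\<close> (the end of \<open>[-r, r]\<close>), or a plateau of
  length \<open>D\<close> followed by a front.
\<close>

definition window_profile :: "(real \<Rightarrow> real) \<Rightarrow> real \<Rightarrow> bool" where
  "window_profile g D \<longleftrightarrow> (\<forall>t. 0 \<le> t \<longrightarrow> t \<le> 2 + s \<longrightarrow> g t = indicator {..D} t)
     \<or> (\<forall>t. 0 \<le> t \<longrightarrow> t \<le> 2 + s \<longrightarrow> g t = front (t - D - 1))"

lemma half_conv_profile_far:
  assumes "window_profile g D" "2 + s \<le> D"
  shows "half_conv g = pos_mass 2 - neg_mass (2 + s)"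
proof -
  have "half_conv g = half_conv (\<lambda>t. indicator {..2+s} t)"
    using assms front_left by (intro half_conv_cong) (auto simp: window_profile_def indicator_def)
  also have "\<dots> = pos_mass (2 + s) - neg_mass (2 + s)" by (rule half_conv_step)
  also have "pos_mass (2 + s) = pos_mass 2" using s_pos by (intro pos_mass_const) auto
  finally show ?thesis .
qed

lemma half_conv_profile_ge:
  assumes "window_profile g D" "0 \<le> D"
  shows "pos_mass D - neg_mass (D + 1) \<le> half_conv g"
  using assms(1) unfolding window_profile_def
proof
  assume "\<forall>t. 0 \<le> t \<longrightarrow> t \<le> 2 + s \<longrightarrow> g t = indicator {..D} t"
  then have "half_conv g = half_conv (\<lambda>t. indicator {..D} t)" by (intro half_conv_cong) auto
  also have "\<dots> = pos_mass D - neg_mass D" by (rule half_conv_step)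
  finally show ?thesis using neg_mass_mono[of D "D+1"] by simp
next
  assume "\<forall>t. 0 \<le> t \<longrightarrow> t \<le> 2 + s \<longrightarrow> g t = front (t - D - 1)"
  then have "half_conv g = half_conv (\<lambda>t. front (t - D - 1))" by (intro half_conv_cong) auto
  then show ?thesis using half_conv_front_ge[OF assms(2)] by simp
qed

lemma half_conv_windows_ge_1:
  assumes mass_balance "window_profile g DR" "window_profile h DL" "0 \<le> DR" "0 \<le> DL"
    and "2 + s \<le> DR \<or> 2 + s \<le> DL"
  shows "1 \<le> half_conv g + half_conv h"
  using assms(6)
proof
  assume "2 + s \<le> DR"
  then show ?thesis
    using half_conv_profile_far[OF assms(2)] half_conv_profile_ge[OF assms(3,5)] assms(1,5)
    unfolding mass_balance_def by force
next
  assume "2 + s \<le> DL"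
  then show ?thesis
    using half_conv_profile_far[OF assms(3)] half_conv_profile_ge[OF assms(2,4)] assms(1,4)
    unfolding mass_balance_def by force
qed

context
  fixes a b i :: "nat \<Rightarrow> real" and N :: nat and r :: real
  assumes N_pos: "0 < N"
    and interval_bounds: "\<And>j. j < N \<Longrightarrow> -r \<le> a j \<and> b j \<le> r \<and> 4 + 2 * s < b j - a j"
    and interval_gap: "\<And>j. Suc j < N \<Longrightarrow> b j + 2 < a (Suc j)"
    and sign: "\<And>j. j < N \<Longrightarrow> i j = 1 \<or> i j = -1"
    and balance: mass_balance
begin

lemma interval_gap_lt: "j < k \<Longrightarrow> k < N \<Longrightarrow> b j + 2 < a k"
proof (induction k)
  case (Suc k)
  show ?case
  proof (cases "j = k")
    case False
    then have "b j + 2 < a k" using Suc by simp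
    moreover have "a k < b k" using interval_bounds[of k] Suc s_pos by simp
    ultimately show ?thesis using interval_gap Suc by fastforce
  qed (use interval_gap Suc in simp)
qed simp

lemma left_end_mono: "j \<le> k \<Longrightarrow> k < N \<Longrightarrow> a j \<le> a k"
  using interval_gap_lt[of j k] interval_bounds[of j] s_pos by (cases "j = k") auto

text \<open>
  The cells \<open>[a j, a (j+1))\<close> partition the real line, the first and the last one being
  unbounded. On its cell the pattern has the sign of the \<open>j\<close>-th interval, except that before
  a sign change a front is placed on \<open>(a (j+1) - 2, a (j+1))\<close>.
\<close>

definition cell :: "nat \<Rightarrow> real set" where
  "cell j = {x. (0 < j \<longrightarrow> a j \<le> x) \<and> (Suc j < N \<longrightarrow> x < a (Suc j))}"

definition sign_change :: "nat \<Rightarrow> bool" where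
  "sign_change j \<longleftrightarrow> Suc j < N \<and> i j \<noteq> i (Suc j)"

definition cell_value :: "nat \<Rightarrow> real \<Rightarrow> real" where
  "cell_value j x =
     (if sign_change j \<and> a (Suc j) - 2 < x then - i (Suc j) * front (x - a (Suc j) + 1) else i j)"

definition pattern :: "real \<Rightarrow> real" where
  "pattern x = (\<Sum>j<N. indicator (cell j) x * cell_value j x)"

definition pattern_trunc :: "real \<Rightarrow> real" where
  "pattern_trunc y = indicator {-r..r} y * pattern y"

lemma cellI: "(0 < j \<Longrightarrow> a j \<le> y) \<Longrightarrow> (Suc j < N \<Longrightarrow> y < a (Suc j)) \<Longrightarrow> y \<in> cell j"
  unfolding cell_def by auto

lemma cellD: "y \<in> cell j \<Longrightarrow> (0 < j \<longrightarrow> a j \<le> y) \<and> (Suc j < N \<longrightarrow> y < a (Suc j))"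
  unfolding cell_def by auto

lemma cell_disjoint: assumes "j < k" "k < N" "x \<in> cell j" shows "x \<notin> cell k"
proof
  assume "x \<in> cell k"
  then have "a k \<le> x" using assms by (auto simp: cell_def)
  moreover have "x < a (Suc j)" using assms by (auto simp: cell_def)
  moreover have "a (Suc j) \<le> a k" using assms by (intro left_end_mono) auto
  ultimately show False by simp
qed

lemma cell_cover: "\<exists>j<N. x \<in> cell j"
proof -
  define J where "J = {j. j < N \<and> (j = 0 \<or> a j \<le> x)}"
  have "finite J" "0 \<in> J" using N_pos unfolding J_def by auto
  define j where "j = Max J"
  have "j \<in> J" unfolding j_def using \<open>finite J\<close> \<open>0 \<in> J\<close> by (intro Max_in) auto
  have "x \<in> cell j"
  proof (rule cellI)
    show "0 < j \<Longrightarrow> a j \<le> x" using \<open>j \<in> J\<close> unfolding J_def by auto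
    show "x < a (Suc j)" if "Suc j < N"
    proof (rule ccontr)
      assume "\<not> x < a (Suc j)"
      then have "Suc j \<in> J" using that unfolding J_def by auto
      then show False using Max_ge[OF \<open>finite J\<close>] unfolding j_def by fastforce
    qed
  qed
  then show ?thesis using \<open>j \<in> J\<close> unfolding J_def by auto
qed

lemma sign_change_opposite: "sign_change j \<Longrightarrow> i j = - i (Suc j)"
  unfolding sign_change_def using sign[of j] sign[of "Suc j"] by auto

lemma no_sign_change_same: "Suc j < N \<Longrightarrow> \<not> sign_change j \<Longrightarrow> i j = i (Suc j)"
  unfolding sign_change_def by auto

lemma pattern_eq_cell_value: assumes "j < N" "x \<in> cell j" shows "pattern x = cell_value j x"
proof -
  have "x \<notin> cell k" if "k \<in> {..<N} - {j}" for k
    using cell_disjoint[of j k x] cell_disjoint[of k j x] assms that by (cases "j < k") auto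
  then have "(\<Sum>k\<in>{..<N} - {j}. indicator (cell k) x * cell_value k x) = 0"
    by (intro sum.neutral) auto
  then show ?thesis unfolding pattern_def using assms by (subst sum.remove[of _ j]) auto
qed

lemma abs_pattern_le_1: "\<bar>pattern x\<bar> \<le> 1"
proof -
  obtain j where "j < N" "x \<in> cell j" using cell_cover by blast
  then show ?thesis
    unfolding pattern_eq_cell_value[OF \<open>j < N\<close> \<open>x \<in> cell j\<close>] cell_value_def
    using sign[of j] sign[of "Suc j"] abs_front_le_1[of "x - a (Suc j) + 1"]
    by (auto simp: sign_change_def abs_mult)
qed

lemma abs_pattern_trunc_le_1: "\<bar>pattern_trunc y\<bar> \<le> 1"
  using abs_pattern_le_1[of y] by (auto simp: pattern_trunc_def indicator_def)

lemma borel_measurable_pattern[measurable]: "pattern \<in> borel_measurable borel"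
proof -
  have "cell j = {x. 0 < j \<longrightarrow> a j \<le> x} \<inter> {x. Suc j < N \<longrightarrow> x < a (Suc j)}" for j
    unfolding cell_def by auto
  then have [measurable]: "cell j \<in> sets borel" for j by simp
  have [measurable]: "cell_value j \<in> borel_measurable borel" for j
    unfolding cell_value_def[abs_def] by measurable
  show ?thesis unfolding pattern_def[abs_def] by measurable
qed

lemma borel_measurable_pattern_trunc[measurable]: "pattern_trunc \<in> borel_measurable borel"
  unfolding pattern_trunc_def[abs_def] by measurable

lemma Top_pattern: "Top K {-r..r} pattern x = (LINT y|lborel. K (x - y) * pattern_trunc y)"
  unfolding Top_def pattern_trunc_def by (simp add: mult.assoc)

lemma pattern_trunc_outside: "y < -r \<or> r < y \<Longrightarrow> pattern_trunc y = 0"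
  by (auto simp: pattern_trunc_def)

lemma pattern_trunc_plateau:
  assumes "j < N" "-r \<le> y" "y \<le> r" "0 < j \<Longrightarrow> a j \<le> y" "Suc j < N \<Longrightarrow> y < a (Suc j)"
    and "\<not> (sign_change j \<and> a (Suc j) - 2 < y)"
  shows "pattern_trunc y = i j"
proof -
  have "y \<in> cell j" using assms by (intro cellI) auto
  moreover have "cell_value j y = i j" using assms(6) unfolding cell_value_def by auto
  ultimately show ?thesis
    using assms(2,3) pattern_eq_cell_value[OF \<open>j < N\<close>] by (simp add: pattern_trunc_def)
qed

lemma pattern_on_interval:
  assumes "j < N" "a j \<le> x" "x \<le> b j"
  shows "pattern_trunc x = i j" "pattern x = i j"
proof -
  show "pattern_trunc x = i j"
    using assms interval_bounds[of j] interval_gap[of j] by (intro pattern_trunc_plateau) (auto simp: sign_change_def)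
  then show "pattern x = i j"
    using assms interval_bounds[of j] by (simp add: pattern_trunc_def)
qed

lemma pattern_trunc_across:
  assumes "Suc j < N" "-r \<le> y" "0 < j \<Longrightarrow> a j \<le> y" "y \<le> b (Suc j)"
  shows "pattern_trunc y = (if sign_change j then i j * front (y - a (Suc j) + 1) else i j)"
proof (cases "y < a (Suc j)")
  case True
  have "y \<le> r" using True interval_bounds[OF assms(1)] interval_gap[OF assms(1)] s_pos by auto
  have "y \<in> cell j" using True assms(3) by (intro cellI) auto
  then show ?thesis
    using pattern_eq_cell_value[of j y] assms True \<open>y \<le> r\<close> front_left[of "y - a (Suc j) + 1"]
      sign_change_opposite[of j]
    by (auto simp: pattern_trunc_def cell_value_def)
next
  case False
  then have "pattern_trunc y = i (Suc j)" using assms by (intro pattern_on_interval) auto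
  then show ?thesis
    using False front_right[of "y - a (Suc j) + 1"] sign_change_opposite[of j] no_sign_change_same[OF assms(1)]
    by auto
qed

lemma pattern_fixed_point_transition:
  assumes j: "j < N" "x \<in> cell j" and transition: "sign_change j" "a (Suc j) - 2 < x"
  shows "pattern x = sat (Top K {-r..r} pattern x)"
proof -
  define m where "m = a (Suc j) - 1"
  have "Suc j < N" using transition by (simp add: sign_change_def)
  have "x < a (Suc j)" using j cellD \<open>Suc j < N\<close> by blast
  have near: "pattern_trunc y = i j * front (y - m)" if "\<bar>x - y\<bar> \<le> 2 + s" for y
    using pattern_trunc_across[OF \<open>Suc j < N\<close>, of y] that transition \<open>x < a (Suc j)\<close>
      interval_bounds[OF j(1)] interval_bounds[OF \<open>Suc j < N\<close>] interval_gap[OF \<open>Suc j < N\<close>]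
    by (auto simp: m_def algebra_simps)
  have "Top K {-r..r} pattern x = (LINT y|lborel. K (x - y) * (i j * front (y - m)))"
    unfolding Top_pattern
    by (rule Bochner_Integration.integral_cong[OF refl])
      (use near K_zero_far in \<open>force\<close>)
  also have "\<dots> = i j * (LINT z|lborel. K ((x - m) - z) * front z)"
    by (subst lborel_integral_shift[where a=m]) (simp add: algebra_simps)
  finally have "sat (Top K {-r..r} pattern x) = i j * front (x - m)"
    using sat_sign_mult[OF sign[OF j(1)]] front_fixed_point[of "x - m"] transition \<open>x < a (Suc j)\<close>
    by (simp add: m_def)
  also have "\<dots> = pattern x"
    using pattern_eq_cell_value[OF j] transition sign_change_opposite[of j]
    by (simp add: cell_value_def m_def algebra_simps)
  finally show ?thesis by simp
qed

lemma right_window: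
  assumes j: "j < N" "x \<in> cell j" "-r \<le> x" "x \<le> r"
    and plateau: "\<not> (sign_change j \<and> a (Suc j) - 2 < x)"
  shows "\<exists>D\<ge>0. window_profile (\<lambda>t. i j * pattern_trunc (x + t)) D \<and> (2 + s \<le> D \<or> b j \<le> x + D)"
proof -
  have ii: "i j * i j = 1" using sign[OF j(1)] by auto
  have left: "0 < j \<longrightarrow> a j \<le> x" using cellD[OF j(2)] by auto
  show ?thesis
  proof (cases "Suc j < N")
    case False
    have "pattern_trunc (x + t) = i j" if "0 \<le> t" "x + t \<le> r" for t
      using False that left j by (intro pattern_trunc_plateau) (auto simp: sign_change_def)
    then have "i j * pattern_trunc (x + t) = indicator {..r - x} t" if "0 \<le> t" for t
      using pattern_trunc_outside[of "x + t"] ii that by (cases "x + t \<le> r") (auto simp: indicator_def)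
    then have "window_profile (\<lambda>t. i j * pattern_trunc (x + t)) (r - x)"
      unfolding window_profile_def by simp
    then show ?thesis using j interval_bounds[OF j(1)] by (intro exI[of _ "r - x"]) auto
  next
    case True
    define D where "D = (if sign_change j then a (Suc j) - 2 - x else 2 + s)"
    have "x < a (Suc j)" using cellD[OF j(2)] True by auto
    have across: "pattern_trunc (x + t) = (if sign_change j then i j * front (x + t - a (Suc j) + 1) else i j)"
      if "0 \<le> t" "t \<le> 2 + s" for t
      by (intro pattern_trunc_across[OF True])
        (use that j left \<open>x < a (Suc j)\<close> interval_bounds[OF True] in auto)
    have "window_profile (\<lambda>t. i j * pattern_trunc (x + t)) D"
      unfolding window_profile_def D_def using across ii by (auto simp: mult.assoc[symmetric] algebra_simps)
    moreover have "0 \<le> D" "2 + s \<le> D \<or> b j \<le> x + D"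
      using plateau s_pos interval_gap[OF True] by (auto simp: D_def)
    ultimately show ?thesis by blast
  qed
qed

lemma left_window:
  assumes j: "j < N" "x \<in> cell j" "-r \<le> x" "x \<le> r"
    and plateau: "\<not> (sign_change j \<and> a (Suc j) - 2 < x)"
  shows "\<exists>D\<ge>0. window_profile (\<lambda>t. i j * pattern_trunc (x - t)) D \<and> (2 + s \<le> D \<or> x - D \<le> a j)"
proof -
  have ii: "i j * i j = 1" using sign[OF j(1)] by auto
  have own: "pattern_trunc y = i j" if "0 < j \<Longrightarrow> a j \<le> y" "y \<le> x" "-r \<le> y" for y
    using cellD[OF j(2)] that j plateau by (intro pattern_trunc_plateau) auto
  show ?thesis
  proof (cases j)
    case 0
    have "i j * pattern_trunc (x - t) = indicator {..x + r} t" if "0 \<le> t" for t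
      using own[of "x - t"] pattern_trunc_outside[of "x - t"] 0 ii that
      by (cases "-r \<le> x - t") (auto simp: indicator_def)
    then have "window_profile (\<lambda>t. i j * pattern_trunc (x - t)) (x + r)"
      unfolding window_profile_def by simp
    then show ?thesis using j 0 interval_bounds[OF j(1)] by (intro exI[of _ "x + r"]) auto
  next
    case (Suc k)
    define D where "D = (if sign_change k then x - a j else 2 + s)"
    have "Suc k < N" "k < N" "a j \<le> x" using j cellD[OF j(2)] Suc by auto
    have across: "pattern_trunc (x - t) = (if sign_change k then i k * front (x - t - a (Suc k) + 1) else i k)"
      if "0 \<le> t" "t \<le> 2 + s" "x - t < a (Suc k)" for t
      by (intro pattern_trunc_across[OF \<open>Suc k < N\<close>])
        (use that \<open>a j \<le> x\<close> Suc interval_bounds[OF \<open>k < N\<close>] interval_bounds[OF j(1)]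
          interval_gap[OF \<open>Suc k < N\<close>] in auto)
    have profile_value: "i j * pattern_trunc (x - t) = (if sign_change k then front (t - D - 1) else 1)"
      if "0 \<le> t" "t \<le> 2 + s" for t
    proof (cases "a j \<le> x - t")
      case True
      then show ?thesis
        using own[of "x - t"] that ii front_left[of "t - D - 1"] j interval_bounds[OF j(1)]
        by (auto simp: D_def)
    next
      case False
      then show ?thesis
        using across[OF that] False front_minus[of "t - D - 1"] sign_change_opposite[of k]
          no_sign_change_same[OF \<open>Suc k < N\<close>] ii Suc
        by (auto simp: D_def algebra_simps)
    qed
    have "window_profile (\<lambda>t. i j * pattern_trunc (x - t)) D"
      unfolding window_profile_def using profile_value by (auto simp: D_def)
    moreover have "0 \<le> D" "2 + s \<le> D \<or> x - D \<le> a j"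
      using \<open>a j \<le> x\<close> s_pos by (auto simp: D_def)
    ultimately show ?thesis by blast
  qed
qed

lemma pattern_fixed_point:
  assumes "-r \<le> x" "x \<le> r"
  shows "pattern x = sat (Top K {-r..r} pattern x)"
proof -
  obtain j where j: "j < N" "x \<in> cell j" using cell_cover by blast
  show ?thesis
  proof (cases "sign_change j \<and> a (Suc j) - 2 < x")
    case True
    then show ?thesis using pattern_fixed_point_transition j by blast
  next
    case plateau: False
    obtain DR where R: "0 \<le> DR" "window_profile (\<lambda>t. i j * pattern_trunc (x + t)) DR"
      "2 + s \<le> DR \<or> b j \<le> x + DR"
      using right_window[OF j assms plateau] by blast
    obtain DL where L: "0 \<le> DL" "window_profile (\<lambda>t. i j * pattern_trunc (x - t)) DL"
      "2 + s \<le> DL \<or> x - DL \<le> a j"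
      using left_window[OF j assms plateau] by blast
    have "2 + s \<le> DR \<or> 2 + s \<le> DL" using R(3) L(3) interval_bounds[OF j(1)] by auto
    then have "1 \<le> half_conv (\<lambda>t. i j * pattern_trunc (x + t)) + half_conv (\<lambda>t. i j * pattern_trunc (x - t))"
      using half_conv_windows_ge_1[OF balance R(2) L(2) R(1) L(1)] by blast
    also have "\<dots> = i j * Top K {-r..r} pattern x"
      unfolding Top_pattern conv_eq_half_conv[OF borel_measurable_pattern_trunc abs_pattern_trunc_le_1]
        half_conv_cmult by (simp add: algebra_simps)
    finally have "sat (Top K {-r..r} pattern x) = i j" by (rule sat_eq_sign[OF sign[OF j(1)]])
    then show ?thesis using pattern_eq_cell_value[OF j] plateau by (simp add: cell_value_def)
  qed
qed

lemma stationary_pattern: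
  "\<exists>u. u \<in> borel_measurable borel \<and> (\<forall>x. \<bar>u x\<bar> \<le> 1)
     \<and> (\<forall>x\<in>{-r..r}. u x = sat (Top K {-r..r} u x)) \<and> (\<forall>j<N. \<forall>x\<in>{a j..b j}. u x = i j)"
  using abs_pattern_le_1 pattern_fixed_point pattern_on_interval(2) by (intro exI[of _ pattern]) auto

end

end

lemma
  fixes S :: "real set"
  assumes "S \<subseteq> {-r..r}" "S \<noteq> {}"
  shows subset_Inf_Sup: "S \<subseteq> {Inf S..Sup S}"
    and Inf_Sup_bounds: "-r \<le> Inf S" "Sup S \<le> r"
    and diameter_le_Sup_Inf: "diameter S \<le> Sup S - Inf S"
    and Inf_Sup_closure: "Inf S \<in> closure S" "Sup S \<in> closure S"
proof -
  have bdd: "bdd_below S" "bdd_above S"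
    using assms(1) by (meson atLeastAtMost_iff bdd_belowI subset_eq, meson atLeastAtMost_iff bdd_aboveI subset_eq)
  show hull: "S \<subseteq> {Inf S..Sup S}" using bdd by (auto intro: cInf_lower cSup_upper)
  show "-r \<le> Inf S" "Sup S \<le> r" using assms by (auto intro!: cInf_greatest cSup_least)
  show "Inf S \<in> closure S" "Sup S \<in> closure S"
    using assms(2) bdd by (auto intro: closure_contains_Inf closure_contains_Sup)
  show "diameter S \<le> Sup S - Inf S"
  proof (rule diameter_le)
    show "S \<noteq> {} \<or> 0 \<le> Sup S - Inf S" using assms(2) by simp
    show "norm (x - y) \<le> Sup S - Inf S" if "x \<in> S" "y \<in> S" for x y
    proof -
      have "x \<in> {Inf S..Sup S}" "y \<in> {Inf S..Sup S}" using hull that by auto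
      then show ?thesis by (auto simp: abs_le_iff)
    qed
  qed
qed

lemma is_interval_Inf_Sup:
  fixes S :: "real set"
  assumes "is_interval S" "S \<subseteq> {-r..r}" "S \<noteq> {}"
  shows "{Inf S<..<Sup S} \<subseteq> S"
proof
  have bdd: "bdd_below S" "bdd_above S"
    using assms(2) by (meson atLeastAtMost_iff bdd_belowI subset_eq, meson atLeastAtMost_iff bdd_aboveI subset_eq)
  fix z assume z: "z \<in> {Inf S<..<Sup S}"
  obtain p where "p \<in> S" "p < z" using z cInf_less_iff[OF assms(3) bdd(1)] by auto
  moreover obtain q where "q \<in> S" "z < q" using z less_cSup_iff[OF assms(3) bdd(2)] by auto
  ultimately show "z \<in> S" using assms(1) unfolding is_interval_1 by (meson less_imp_le)
qed

lemma sorting_permutation: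
  fixes a :: "nat \<Rightarrow> real"
  assumes inj: "inj_on a {..<N}"
  obtains \<pi> where "bij_betw \<pi> {..<N} {..<N}" "\<And>p q. p < q \<Longrightarrow> q < N \<Longrightarrow> a (\<pi> p) < a (\<pi> q)"
proof -
  define L where "L = sorted_list_of_set (a ` {..<N})"
  have "set L = a ` {..<N}" "length L = N" "sorted_wrt (<) L" "distinct L"
    using inj by (auto simp: L_def card_image)
  define \<pi> where "\<pi> p = the_inv_into {..<N} a (L ! p)" for p
  have L_nth: "L ! p \<in> a ` {..<N}" if "p < N" for p
    using that \<open>set L = _\<close> \<open>length L = N\<close> nth_mem[of p L] by auto
  have \<pi>_range: "\<pi> p < N" if "p < N" for p
    using the_inv_into_into[OF inj L_nth[OF that], of "{..<N}"] by (simp add: \<pi>_def)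
  have a_\<pi>: "a (\<pi> p) = L ! p" if "p < N" for p
    using f_the_inv_into_f[OF inj L_nth[OF that]] by (simp add: \<pi>_def)
  have "inj_on \<pi> {..<N}"
  proof (rule inj_onI)
    fix p q assume "p \<in> {..<N}" "q \<in> {..<N}" "\<pi> p = \<pi> q"
    then have "L ! p = L ! q" using a_\<pi> by (metis lessThan_iff)
    then show "p = q" using \<open>distinct L\<close> \<open>p \<in> {..<N}\<close> \<open>q \<in> {..<N}\<close> \<open>length L = N\<close>
      nth_eq_iff_index_eq by auto
  qed
  moreover have "\<pi> ` {..<N} = {..<N}"
    by (rule endo_inj_surj) (use \<pi>_range \<open>inj_on \<pi> {..<N}\<close> in auto)
  moreover have "a (\<pi> p) < a (\<pi> q)" if "p < q" "q < N" for p q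
    using sorted_wrt_nth_less[OF \<open>sorted_wrt (<) L\<close> that(1)] that \<open>length L = N\<close> a_\<pi> by simp
  ultimately show ?thesis using that by (auto simp: bij_betw_def)
qed

lemma sorted_interval_family:
  fixes Om :: "nat \<Rightarrow> real set" and L g r :: real
  assumes interval: "\<And>j. j < N \<Longrightarrow> is_interval (Om j)"
    and bounded: "\<And>j. j < N \<Longrightarrow> Om j \<subseteq> {-r..r}"
    and disjoint: "\<And>j k. j < N \<Longrightarrow> k < N \<Longrightarrow> j \<noteq> k \<Longrightarrow> Om j \<inter> Om k = {}"
    and long: "\<And>j. j < N \<Longrightarrow> L < diameter (Om j)" and "0 \<le> L"
    and apart: "\<And>j k. j < N \<Longrightarrow> k < N \<Longrightarrow> j \<noteq> k \<Longrightarrow> g < setdist (Om j) (Om k)"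
  obtains \<pi> and a b :: "nat \<Rightarrow> real"
  where "bij_betw \<pi> {..<N} {..<N}" "\<And>j. j < N \<Longrightarrow> Om j \<subseteq> {a j..b j}"
    "\<And>p. p < N \<Longrightarrow> -r \<le> a (\<pi> p) \<and> b (\<pi> p) \<le> r \<and> L < b (\<pi> p) - a (\<pi> p)"
    "\<And>p. Suc p < N \<Longrightarrow> b (\<pi> p) + g < a (\<pi> (Suc p))"
proof -
  define a where "a j = Inf (Om j)" for j
  define b where "b j = Sup (Om j)" for j
  have nonempty: "Om j \<noteq> {}" if "j < N" for j using long[OF that] \<open>0 \<le> L\<close> by auto
  note endpoints = subset_Inf_Sup Inf_Sup_bounds diameter_le_Sup_Inf Inf_Sup_closure
  have hull: "Om j \<subseteq> {a j..b j}" and ends: "-r \<le> a j" "b j \<le> r" and length: "L < b j - a j"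
    and closure: "a j \<in> closure (Om j)" "b j \<in> closure (Om j)" if "j < N" for j
    using endpoints[OF bounded nonempty, OF that that] long[OF that] unfolding a_def b_def by auto
  have no_overlap: "\<not> (a j \<le> a k \<and> a k < b j)" if "j < N" "k < N" "j \<noteq> k" for j k
  proof
    assume "a j \<le> a k \<and> a k < b j"
    then have "(a k + min (b j) (b k)) / 2 \<in> {a j<..<b j} \<inter> {a k<..<b k}"
      using length[OF that(2)] \<open>0 \<le> L\<close> by auto
    then show False
      using is_interval_Inf_Sup[OF interval bounded nonempty] disjoint[OF that] that
      unfolding a_def b_def by blast
  qed
  have "inj_on a {..<N}"
    using no_overlap length \<open>0 \<le> L\<close> by (intro inj_onI) force
  then obtain \<pi> where \<pi>: "bij_betw \<pi> {..<N} {..<N}"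
    and sorted: "\<And>p q. p < q \<Longrightarrow> q < N \<Longrightarrow> a (\<pi> p) < a (\<pi> q)"
    using sorting_permutation by blast
  have \<pi>_range: "p < N \<Longrightarrow> \<pi> p < N" for p using \<pi> by (auto simp: bij_betw_def)
  have "b (\<pi> p) + g < a (\<pi> (Suc p))" if "Suc p < N" for p
  proof -
    have "\<pi> p \<noteq> \<pi> (Suc p)"
      using \<pi> that unfolding bij_betw_def inj_on_def by (metis Suc_lessD lessThan_iff n_not_Suc_n)
    note jk = \<pi>_range[OF Suc_lessD[OF that]] \<pi>_range[OF that] this
    have "g < dist (b (\<pi> p)) (a (\<pi> (Suc p)))"
      using setdist_le_dist[OF closure(2) closure(1)] apart[OF jk] jk by fastforce
    moreover have "b (\<pi> p) \<le> a (\<pi> (Suc p))"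
      using no_overlap[OF jk] sorted[of p "Suc p"] that by auto
    ultimately show ?thesis by (simp add: dist_real_def)
  qed
  then show ?thesis using that[OF \<pi> hull] ends length \<pi>_range by blast
qed

context inhibitory_kernel
begin

lemma stationary_solution_on_intervals:
  fixes Om :: "nat \<Rightarrow> real set" and i :: "nat \<Rightarrow> real"
  assumes mass_balance
    and "\<And>j. j < N \<Longrightarrow> is_interval (Om j)"
    and "\<And>j. j < N \<Longrightarrow> Om j \<subseteq> {-r..r}"
    and "\<And>j k. j < N \<Longrightarrow> k < N \<Longrightarrow> j \<noteq> k \<Longrightarrow> Om j \<inter> Om k = {}"
    and "\<And>j. j < N \<Longrightarrow> 4 + 2 * s < diameter (Om j)"
    and "\<And>j k. j < N \<Longrightarrow> k < N \<Longrightarrow> j \<noteq> k \<Longrightarrow> 2 < setdist (Om j) (Om k)"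
    and sign: "\<And>j. j < N \<Longrightarrow> i j = 1 \<or> i j = -1"
  shows "\<exists>u. u \<in> borel_measurable borel \<and> (\<forall>x. \<bar>u x\<bar> \<le> 1)
     \<and> (\<forall>x\<in>{-r..r}. u x = sat (Top K {-r..r} u x)) \<and> (\<forall>j<N. \<forall>x\<in>Om j. u x = i j)"
proof (cases "N = 0")
  case True
  then show ?thesis by (intro exI[of _ "\<lambda>_. 0"]) (simp add: Top_def sat_def)
next
  case False
  obtain \<pi> a b where \<pi>: "bij_betw \<pi> {..<N} {..<N}" and hull: "\<And>j. j < N \<Longrightarrow> Om j \<subseteq> {a j..b j}"
    and "\<And>p. p < N \<Longrightarrow> -r \<le> a (\<pi> p) \<and> b (\<pi> p) \<le> r \<and> 4 + 2 * s < b (\<pi> p) - a (\<pi> p)"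
    and "\<And>p. Suc p < N \<Longrightarrow> b (\<pi> p) + 2 < a (\<pi> (Suc p))"
    using sorted_interval_family[where N=N and Om=Om and r=r and L="4 + 2 * s" and g=2] assms(2-6) s_pos
    by auto
  moreover have "(i \<circ> \<pi>) p = 1 \<or> (i \<circ> \<pi>) p = -1" if "p < N" for p
    using sign \<pi> that by (auto simp: bij_betw_def)
  ultimately obtain u where u: "u \<in> borel_measurable borel" "\<forall>x. \<bar>u x\<bar> \<le> 1"
      "\<forall>x\<in>{-r..r}. u x = sat (Top K {-r..r} u x)" "\<forall>p<N. \<forall>x\<in>{a (\<pi> p)..b (\<pi> p)}. u x = i (\<pi> p)"
    using stationary_pattern[where a="a \<circ> \<pi>" and b="b \<circ> \<pi>" and i="i \<circ> \<pi>" and N=N and r=r] False \<open>mass_balance\<close> by auto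
  have "u x = i j" if "j < N" "x \<in> Om j" for j x
  proof -
    have "j \<in> \<pi> ` {..<N}" using \<pi> \<open>j < N\<close> by (auto simp: bij_betw_def)
    then obtain p where "p < N" "\<pi> p = j" by auto
    then show ?thesis using u(4) hull[OF \<open>j < N\<close>] \<open>x \<in> Om j\<close> by auto
  qed
  then show ?thesis using u by blast
qed

end

lemma inhibitory_kernel_if_hyp:
  assumes "K \<in> borel_measurable borel" "\<And>x. \<bar>K x\<bar> \<le> B" "\<And>x. K (- x) = K x" "s > 0"
    and "hyp_iii K s \<or> hyp_iv K s"
  shows "inhibitory_kernel K s B"
proof -
  have pos_supp: "supp (posp K) = {-2..2}" and neg_supp: "supp (negp K) = {-2-s..-2} \<union> {2..2+s}"
    and antimono: "antimono_on {0<..} (posp K)"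
    using assms(5) by (auto simp: hyp_iii_def hyp_iv_def)
  have posp_zero: "posp K x = 0" if "x \<notin> {-2..2}" for x
    using that closure_subset[of "{x. posp K x \<noteq> 0}"] pos_supp unfolding supp_def by auto
  have negp_zero: "negp K x = 0" if "x \<notin> {-2-s..-2} \<union> {2..2+s}" for x
    using that closure_subset[of "{x. negp K x \<noteq> 0}"] neg_supp unfolding supp_def by auto
  show ?thesis
  proof
    show "K x = 0" if "\<bar>x\<bar> > 2 + s" for x
    proof -
      have "x \<notin> {-2..2}" "x \<notin> {-2-s..-2} \<union> {2..2+s}" using that \<open>s > 0\<close> by auto
      then have "posp K x = 0" "negp K x = 0" using posp_zero negp_zero by auto
      then show ?thesis by (simp add: posp_def negp_def max_def split: if_splits)
    qed
    show "posp K y \<le> posp K x" if "0 < x" "x \<le> y" for x y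
      using antimono that unfolding monotone_on_def by auto
    show "negp K x = 0" if "\<bar>x\<bar> < 2" for x
      using that by (intro negp_zero) auto
    show "posp K x = 0" if "\<bar>x\<bar> > 2" for x
      using that by (intro posp_zero) auto
  qed (use assms in auto)
qed

theorem mainTheorem14:
  fixes K :: "real \<Rightarrow> real" and r s :: real and N :: nat
    and Om :: "nat \<Rightarrow> real set"
  assumes K_meas: "K \<in> borel_measurable borel"
    and K_bdd: "bounded (range K)"
    and K_even: "\<And>x. K (- x) = K x"
    and s_pos: "s > 0"
    and hyp: "hyp_iii K s \<or> hyp_iv K s"
    and Om_int: "\<And>j. j < N \<Longrightarrow> is_interval (Om j)"
    and Om_sub: "\<And>j. j < N \<Longrightarrow> Om j \<subseteq> {-r..r}"
    and Om_disj: "\<And>j k. j < N \<Longrightarrow> k < N \<Longrightarrow> j \<noteq> k \<Longrightarrow> Om j \<inter> Om k = {}"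
    and Om_diam: "\<And>j. j < N \<Longrightarrow> diameter (Om j) > 4 + 2 * s"
    and Om_dist: "\<And>j k. j < N \<Longrightarrow> k < N \<Longrightarrow> j \<noteq> k \<Longrightarrow> setdist (Om j) (Om k) > 2"
  shows "\<forall>i :: nat \<Rightarrow> real. (\<forall>j<N. i j \<in> {-1, 1}) \<longrightarrow>
           (\<exists>u :: real \<Rightarrow> real. L2_on {-r..r} u \<and>
              (AE x in lborel. x \<in> {-r..r} \<longrightarrow> u x = sat (Top K {-r..r} u x)) \<and>
              (\<forall>j<N. AE x in lborel. x \<in> Om j \<longrightarrow> u x = i j))"
proof (intro allI impI)
  fix i :: "nat \<Rightarrow> real" assume "\<forall>j<N. i j \<in> {-1, 1}"
  then have sign: "\<And>j. j < N \<Longrightarrow> i j = 1 \<or> i j = -1" by auto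
  obtain B where "\<And>x. \<bar>K x\<bar> \<le> B" using K_bdd unfolding bounded_iff by auto
  then interpret inhibitory_kernel K s B
    using inhibitory_kernel_if_hyp K_meas K_even s_pos hyp by blast
  have mass_balance using hyp mass_balance_if_hyp_iii mass_balance_if_hyp_iv by blast
  then obtain u where "u \<in> borel_measurable borel" "\<forall>x. \<bar>u x\<bar> \<le> 1"
      "\<forall>x\<in>{-r..r}. u x = sat (Top K {-r..r} u x)" "\<forall>j<N. \<forall>x\<in>Om j. u x = i j"
    using stationary_solution_on_intervals[where N=N and Om=Om and r=r and i=i] Om_int Om_sub Om_disj Om_diam Om_dist sign by blast
  then show "\<exists>u. L2_on {-r..r} u \<and> (AE x in lborel. x \<in> {-r..r} \<longrightarrow> u x = sat (Top K {-r..r} u x))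
      \<and> (\<forall>j<N. AE x in lborel. x \<in> Om j \<longrightarrow> u x = i j)"
    using L2_on_bounded by (intro exI[of _ u]) auto
qed

end
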